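(* Consider binary classification with $\mathcal Y=\{-1,+1\}$. Let $Y^*(x)=\arg\max_{y}{\mathbb P}(Y=y\mid X=x)$ be the Bayes optimal label and write $Y^*=Y^*(X)$. Suppose ${\mathbb P}(Y^*=+1)={\mathbb P}(Y^*=-1)$, and let $f$ be a convex function with $f(1)=0$ such that $f(v)$ is monotonically increasing in $|v-1|$ on $\mathrm{dom}(f)$. Then maximizing $D_f(P_{h\times Y^*}\,\|\,Q_{h\times Y^*})$ over classifiers $h:\mathcal X\to\{-1,+1\}$ returns the Bayes optimal classifier $h^*=\arg\max_h{\mathbb P}(h(X)=Y)$.
   Context: $(X,Y)$ is a random pair with features $X\in\mathcal X$ and label $Y\in\{-1,+1\}$. A classifier is a measurable map $h:\mathcal X\to\{-1,+1\}$. $P_{h\times Y^*}(y,y')={\mathbb P}(h(X)=y,Y^*=y')$ is the joint distribution of $(h(X),Y^* )$ and $Q_{h\times Y^*}(y,y')={\mathbb P}(h(X)=y)\,{\mathbb P}(Y^*=y')$ the product of its marginals. For distributions $P,Q$ on a finite set with masses $p,q$, $D_f(P\|Q)=\sum_z q(z) f(p(z)/q(z))$. *)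

theory Defs
  imports "HOL-Probability.Probability"
begin

definition labels :: "int set" where "labels = {-1, 1}"

text \<open>f-divergence between two mass functions on a finite set Z
  (with the convention that a term with q z = 0 contributes 0).\<close>
definition fdiv :: "(real \<Rightarrow> real) \<Rightarrow> ('z \<Rightarrow> real) \<Rightarrow> ('z \<Rightarrow> real) \<Rightarrow> 'z set \<Rightarrow> real" where
  "fdiv f p q Z = (\<Sum>z\<in>Z. q z * f (p z / q z))"

text \<open>Joint distribution of (h(X), Y*) and product of its marginals, Y* = ys(X).\<close>
definition joint_mass :: "'a measure \<Rightarrow> ('a \<Rightarrow> 'x) \<Rightarrow> ('x \<Rightarrow> int) \<Rightarrow> ('x \<Rightarrow> int) \<Rightarrow> int \<times> int \<Rightarrow> real" where
  "joint_mass M X h ys = (\<lambda>(y, y'). measure M {\<omega> \<in> space M. h (X \<omega>) = y \<and> ys (X \<omega>) = y'})"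

definition prod_mass :: "'a measure \<Rightarrow> ('a \<Rightarrow> 'x) \<Rightarrow> ('x \<Rightarrow> int) \<Rightarrow> ('x \<Rightarrow> int) \<Rightarrow> int \<times> int \<Rightarrow> real" where
  "prod_mass M X h ys = (\<lambda>(y, y'). measure M {\<omega> \<in> space M. h (X \<omega>) = y} *
                                     measure M {\<omega> \<in> space M. ys (X \<omega>) = y'})"

text \<open>Bayes optimal label from a version eta of P(Y = +1 | X = x):
  argmax_y P(Y = y | X = x), ties broken in favour of +1.\<close>
definition bayes_label :: "('x \<Rightarrow> real) \<Rightarrow> 'x \<Rightarrow> int" where
  "bayes_label eta x = (if eta x \<ge> 1/2 then 1 else -1)"

definition classifier :: "'x measure \<Rightarrow> ('x \<Rightarrow> int) \<Rightarrow> bool" where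
  "classifier N h \<longleftrightarrow> h \<in> N \<rightarrow>\<^sub>M count_space UNIV \<and> (\<forall>x\<in>space N. h x \<in> labels)"

definition accuracy :: "'a measure \<Rightarrow> ('a \<Rightarrow> 'x) \<Rightarrow> ('a \<Rightarrow> int) \<Rightarrow> ('x \<Rightarrow> int) \<Rightarrow> real" where
  "accuracy M X Y h = measure M {\<omega> \<in> space M. h (X \<omega>) = Y \<omega>}"

end

theory Submission
  imports Defs
begin

(* Bayes optimality: by the defining property of eta, the label +1 carries at least (at most)
   half of the mass of X on any set where eta >= 1/2 (eta <= 1/2). A classifier h differs from
   the Bayes rule only on {h = 1} - {eta >= 1/2} and {eta >= 1/2} - {h = 1}, and on each of
   these the Bayes rule picks the heavier label. Since eta need not be integrable, these
   comparisons are made where |eta| <= n and passed to the limit.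

   Divergence: as Y* is balanced, the row y of D_f(P || Q) equals
   (p/2) (f (2 t) + f (2 (1 - t))) with p = P(h(X) = y) and t = P(Y* = 1 | h(X) = y), and
   convexity on [0, 2] bounds it by (p/2) (f 0 + f 2). Summing over y gives
   D_f <= (f 0 + f 2) / 2, which is the value attained by h = Y*. *)

lemma classifier_comp:
  assumes "X \<in> M \<rightarrow>\<^sub>M N" and "classifier N h"
  shows "classifier M (\<lambda>\<omega>. h (X \<omega>))"
  using assms measurable_space[OF assms(1)] by (auto simp: classifier_def)

lemma classifier_bayes_label:
  assumes "eta \<in> borel_measurable N"
  shows "classifier N (bayes_label eta)"
  using assms unfolding classifier_def bayes_label_def labels_def by auto

lemma (in finite_measure) measure_split_label:
  assumes "classifier M Z" and "E \<in> sets M"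
  shows "measure M E = measure M {\<omega>\<in>E. Z \<omega> = 1} + measure M {\<omega>\<in>E. Z \<omega> = -1}"
proof -
  have [measurable]: "Z \<in> M \<rightarrow>\<^sub>M count_space UNIV" using assms(1) by (simp add: classifier_def)
  have "E = {\<omega>\<in>E. Z \<omega> = 1} \<union> {\<omega>\<in>E. Z \<omega> = -1}"
    using assms sets.sets_into_space[OF assms(2)] by (auto simp: classifier_def labels_def)
  moreover have "{\<omega>\<in>E. Z \<omega> = c} \<in> sets M" for c
    using assms(2) by measurable
  ultimately show ?thesis
    by (subst finite_measure_Union[symmetric]) auto
qed

lemma (in prob_space) balanced_label_half:
  assumes "classifier M Z"
    and "prob {\<omega>\<in>space M. Z \<omega> = 1} = prob {\<omega>\<in>space M. Z \<omega> = -1}"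
    and "c \<in> labels"
  shows "prob {\<omega>\<in>space M. Z \<omega> = c} = 1/2"
  using measure_split_label[OF assms(1) sets.top] prob_space assms(2,3) by (auto simp: labels_def)

lemma convex_perspective_pair_le:
  fixes f :: "real \<Rightarrow> real"
  assumes "convex_on {0..} f" and "0 \<le> a" "0 \<le> b" and "a + b = 2 * q"
  shows "q * f (a / q) + q * f (b / q) \<le> q * (f 0 + f 2)"
proof (cases "q = 0")
  case False
  then have "q > 0" using assms(2-4) by simp
  define t where "t = a / (2 * q)"
  have t: "0 \<le> t" "t \<le> 1" using assms(2-4) \<open>q > 0\<close> by (auto simp: t_def field_simps)
  have "a / q = (1 - t) *\<^sub>R 0 + t *\<^sub>R 2" "b / q = (1 - (1 - t)) *\<^sub>R 0 + (1 - t) *\<^sub>R 2"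
    using \<open>q > 0\<close> assms(4) by (auto simp: t_def field_simps)
  then have "f (a / q) \<le> (1 - t) * f 0 + t * f 2" "f (b / q) \<le> t * f 0 + (1 - t) * f 2"
    using convex_onD[OF assms(1), of t 0 2] convex_onD[OF assms(1), of "1 - t" 0 2] t by auto
  then have "q * f (a / q) + q * f (b / q)
      \<le> q * ((1 - t) * f 0 + t * f 2) + q * (t * f 0 + (1 - t) * f 2)"
    using \<open>q > 0\<close> by (intro add_mono mult_left_mono) auto
  also have "\<dots> = q * (f 0 + f 2)" by (simp add: algebra_simps)
  finally show ?thesis .
qed simp

lemma fdiv_joint_mass_balanced:
  assumes "\<forall>c\<in>labels. measure M {\<omega>\<in>space M. k (X \<omega>) = c} = 1/2"
  shows "fdiv f (joint_mass M X g k) (prod_mass M X g k) (labels \<times> labels) =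
    (\<Sum>y\<in>labels. \<Sum>c\<in>labels. measure M {\<omega>\<in>space M. g (X \<omega>) = y} / 2 *
       f (measure M {\<omega>\<in>space M. g (X \<omega>) = y \<and> k (X \<omega>) = c}
          / (measure M {\<omega>\<in>space M. g (X \<omega>) = y} / 2)))"
  unfolding fdiv_def joint_mass_def prod_mass_def
  by (simp add: sum.cartesian_product[symmetric] assms labels_def)

lemma (in prob_space) fdiv_joint_mass_self:
  assumes "\<forall>c\<in>labels. prob {\<omega>\<in>space M. k (X \<omega>) = c} = 1/2"
  shows "fdiv f (joint_mass M X k k) (prod_mass M X k k) (labels \<times> labels) = (f 0 + f 2) / 2"
proof -
  have "{\<omega>\<in>space M. k (X \<omega>) = y \<and> k (X \<omega>) = c} =
      (if y = c then {\<omega>\<in>space M. k (X \<omega>) = y} else {})" for y c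
    by auto
  then show ?thesis
    unfolding fdiv_joint_mass_balanced[where k = k and X = X, OF assms] by (simp add: assms labels_def)
qed

lemma (in prob_space) fdiv_joint_mass_le:
  fixes f :: "real \<Rightarrow> real"
  assumes "convex_on {0..} f" and "X \<in> M \<rightarrow>\<^sub>M N" and "classifier N g" and "classifier N k"
    and "\<forall>c\<in>labels. prob {\<omega>\<in>space M. k (X \<omega>) = c} = 1/2"
  shows "fdiv f (joint_mass M X g k) (prod_mass M X g k) (labels \<times> labels) \<le> (f 0 + f 2) / 2"
proof -
  let ?p = "\<lambda>y. prob {\<omega>\<in>space M. g (X \<omega>) = y}"
  let ?a = "\<lambda>y c. prob {\<omega>\<in>space M. g (X \<omega>) = y \<and> k (X \<omega>) = c}"
  have gX: "classifier M (\<lambda>\<omega>. g (X \<omega>))" and kX: "classifier M (\<lambda>\<omega>. k (X \<omega>))"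
    using classifier_comp assms(2-4) by blast+
  then have [measurable]: "(\<lambda>\<omega>. g (X \<omega>)) \<in> M \<rightarrow>\<^sub>M count_space UNIV"
    by (simp add: classifier_def)
  have "?p y / 2 * f (?a y 1 / (?p y / 2)) + ?p y / 2 * f (?a y (-1) / (?p y / 2))
      \<le> ?p y / 2 * (f 0 + f 2)" for y
    using measure_split_label[OF kX, of "{\<omega>\<in>space M. g (X \<omega>) = y}"]
    by (intro convex_perspective_pair_le[OF assms(1) measure_nonneg measure_nonneg]) simp
  then have "(\<Sum>c\<in>labels. ?p y / 2 * f (?a y c / (?p y / 2))) \<le> ?p y / 2 * (f 0 + f 2)" for y
    by (simp add: labels_def add.commute)
  then have "fdiv f (joint_mass M X g k) (prod_mass M X g k) (labels \<times> labels)
      \<le> (\<Sum>y\<in>labels. ?p y / 2 * (f 0 + f 2))"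
    unfolding fdiv_joint_mass_balanced[where k = k and X = X, OF assms(5)] by (intro sum_mono)
  also have "\<dots> = (?p 1 + ?p (-1)) / 2 * (f 0 + f 2)"
    by (simp add: labels_def field_simps)
  also have "?p 1 + ?p (-1) = 1"
    using measure_split_label[OF gX sets.top] prob_space by simp
  finally show ?thesis by simp
qed

lemma (in finite_measure) set_integral_bounds:
  fixes g :: "'a \<Rightarrow> real"
  assumes "S \<in> sets M" and "g \<in> borel_measurable M" and "\<And>x. x \<in> S \<Longrightarrow> a \<le> g x \<and> g x \<le> b"
  shows "a * measure M S \<le> (LINT x:S|M. g x) \<and> (LINT x:S|M. g x) \<le> b * measure M S"
proof -
  have integrable: "set_integrable M S h"
    if "h \<in> borel_measurable M" "\<And>x. x \<in> S \<Longrightarrow> \<bar>h x\<bar> \<le> B" "0 \<le> B"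
    for h :: "'a \<Rightarrow> real" and B
    unfolding set_integrable_def
    by (rule integrable_const_bound[where B = B]) (use assms(1) that in \<open>auto simp: indicator_def\<close>)
  have "set_integrable M S g"
    using assms by (intro integrable[where B = "max \<bar>a\<bar> \<bar>b\<bar>"]) fastforce+
  moreover have "set_integrable M S (\<lambda>_. c)" for c :: real
    by (rule integrable[where B = "\<bar>c\<bar>"]) auto
  ultimately have "(LINT x:S|M. a) \<le> (LINT x:S|M. g x)" "(LINT x:S|M. g x) \<le> (LINT x:S|M. b)"
    using assms(3) by (auto intro!: set_integral_mono)
  then show ?thesis
    using assms(1) by (simp add: set_integral_const mult.commute)
qed

locale bayes_model = prob_space M for M :: "'a measure" +
  fixes N :: "'x measure" and X :: "'a \<Rightarrow> 'x" and Y :: "'a \<Rightarrow> int" and eta :: "'x \<Rightarrow> real"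
  assumes X_measurable[measurable]: "X \<in> M \<rightarrow>\<^sub>M N"
    and Y_label: "classifier M Y"
    and eta_measurable[measurable]: "eta \<in> borel_measurable N"
    and eta_cond_prob: "\<forall>A\<in>sets N. prob {\<omega>\<in>space M. X \<omega> \<in> A \<and> Y \<omega> = 1}
                          = (LINT \<omega>:(X -` A \<inter> space M)|M. eta (X \<omega>))"
begin

lemma Y_measurable[measurable]: "Y \<in> M \<rightarrow>\<^sub>M count_space UNIV"
  using Y_label by (simp add: classifier_def)

definition label_mass :: "int \<Rightarrow> 'x set \<Rightarrow> real" where
  "label_mass c S = prob {\<omega>\<in>space M. X \<omega> \<in> S \<and> Y \<omega> = c}"

lemma prob_X_in:
  assumes "S \<in> sets N"
  shows "prob (X -` S \<inter> space M) = label_mass 1 S + label_mass (-1) S"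
proof -
  have "X -` S \<inter> space M \<in> sets M" using assms by measurable
  moreover have "{\<omega>\<in>X -` S \<inter> space M. Y \<omega> = c} = {\<omega>\<in>space M. X \<omega> \<in> S \<and> Y \<omega> = c}" for c
    by auto
  ultimately show ?thesis
    using measure_split_label[OF Y_label] by (simp add: label_mass_def)
qed

lemma label_mass_split:
  assumes "S \<in> sets N" and "T \<in> sets N"
  shows "label_mass c S = label_mass c (S \<inter> T) + label_mass c (S - T)"
proof -
  have "{\<omega>\<in>space M. X \<omega> \<in> S \<and> Y \<omega> = c}
      = {\<omega>\<in>space M. X \<omega> \<in> S \<inter> T \<and> Y \<omega> = c} \<union> {\<omega>\<in>space M. X \<omega> \<in> S - T \<and> Y \<omega> = c}"
    by auto
  moreover have "{\<omega>\<in>space M. X \<omega> \<in> S \<inter> T \<and> Y \<omega> = c} \<in> sets M"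
    "{\<omega>\<in>space M. X \<omega> \<in> S - T \<and> Y \<omega> = c} \<in> sets M"
    using assms by measurable
  ultimately show ?thesis
    unfolding label_mass_def by (subst finite_measure_Union[symmetric]) auto
qed

lemma label_mass_bounds:
  assumes "S \<in> sets N" and "\<And>x. x \<in> S \<Longrightarrow> a \<le> eta x \<and> eta x \<le> b"
  shows "a * (label_mass 1 S + label_mass (-1) S) \<le> label_mass 1 S
    \<and> label_mass 1 S \<le> b * (label_mass 1 S + label_mass (-1) S)"
proof -
  have "X -` S \<inter> space M \<in> sets M" using assms(1) by measurable
  from set_integral_bounds[OF this, of "\<lambda>\<omega>. eta (X \<omega>)" a b] show ?thesis
    using assms eta_cond_prob by (simp add: prob_X_in label_mass_def)
qed

lemma label_mass_truncation:
  assumes "C \<in> sets N"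
  shows "(\<lambda>n. label_mass c (C \<inter> {x\<in>space N. \<bar>eta x\<bar> \<le> real n})) \<longlonglongrightarrow> label_mass c C"
proof -
  define A where
    "A n = {\<omega>\<in>space M. X \<omega> \<in> C \<inter> {x\<in>space N. \<bar>eta x\<bar> \<le> real n} \<and> Y \<omega> = c}" for n
  have "range A \<subseteq> sets M" unfolding A_def using assms by auto
  moreover have "incseq A"
    by (auto simp: incseq_def A_def intro: order_trans)
  moreover have "(\<Union>n. A n) = {\<omega>\<in>space M. X \<omega> \<in> C \<and> Y \<omega> = c}"
    using real_arch_simple measurable_space[OF X_measurable] by (fastforce simp: A_def)
  ultimately show ?thesis
    using finite_Lim_measure_incseq[of A] by (simp add: label_mass_def A_def)
qed

lemma label_mass_le_of_half_le:
  assumes "C \<in> sets N" and "\<forall>x\<in>C. 1/2 \<le> eta x"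
  shows "label_mass (-1) C \<le> label_mass 1 C"
proof -
  let ?C = "\<lambda>n. C \<inter> {x\<in>space N. \<bar>eta x\<bar> \<le> real n}"
  have "label_mass (-1) (?C n) \<le> label_mass 1 (?C n)" for n
  proof -
    have "?C n \<in> sets N" using assms(1) by auto
    moreover have "1/2 \<le> eta x \<and> eta x \<le> real n" if "x \<in> ?C n" for x
      using assms(2) that by auto
    ultimately show ?thesis
      using label_mass_bounds[of "?C n" "1/2" "real n"] by auto
  qed
  then show ?thesis
    by (intro LIMSEQ_le[OF label_mass_truncation[OF assms(1)] label_mass_truncation[OF assms(1)]]) auto
qed

lemma label_mass_le_of_le_half:
  assumes "C \<in> sets N" and "\<forall>x\<in>C. eta x \<le> 1/2"
  shows "label_mass 1 C \<le> label_mass (-1) C"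
proof -
  let ?C = "\<lambda>n. C \<inter> {x\<in>space N. \<bar>eta x\<bar> \<le> real n}"
  have "label_mass 1 (?C n) \<le> label_mass (-1) (?C n)" for n
  proof -
    have "?C n \<in> sets N" using assms(1) by auto
    moreover have "- real n \<le> eta x \<and> eta x \<le> 1/2" if "x \<in> ?C n" for x
      using assms(2) that by auto
    ultimately show ?thesis
      using label_mass_bounds[of "?C n" "- real n" "1/2"] by auto
  qed
  then show ?thesis
    by (intro LIMSEQ_le[OF label_mass_truncation[OF assms(1)] label_mass_truncation[OF assms(1)]]) auto
qed

lemma accuracy_eq_label_mass:
  assumes "classifier N h"
  shows "accuracy M X Y h
    = label_mass 1 {x\<in>space N. h x = 1} + label_mass (-1) (space N - {x\<in>space N. h x = 1})"
proof -
  let ?G = "{x\<in>space N. h x = 1}"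
  have [measurable]: "h \<in> N \<rightarrow>\<^sub>M count_space UNIV" using assms by (simp add: classifier_def)
  have "{\<omega>\<in>space M. h (X \<omega>) = Y \<omega>}
      = {\<omega>\<in>space M. X \<omega> \<in> ?G \<and> Y \<omega> = 1} \<union> {\<omega>\<in>space M. X \<omega> \<in> space N - ?G \<and> Y \<omega> = -1}"
    using assms Y_label measurable_space[OF X_measurable] by (auto simp: classifier_def labels_def)
  moreover have "{\<omega>\<in>space M. X \<omega> \<in> ?G \<and> Y \<omega> = 1} \<in> sets M"
    "{\<omega>\<in>space M. X \<omega> \<in> space N - ?G \<and> Y \<omega> = -1} \<in> sets M"
    by measurable
  ultimately show ?thesis
    unfolding accuracy_def label_mass_def by (subst finite_measure_Union[symmetric]) auto
qed

lemma accuracy_le_bayes_label: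
  assumes "classifier N h"
  shows "accuracy M X Y h \<le> accuracy M X Y (bayes_label eta)"
proof -
  define G where "G = {x\<in>space N. h x = 1}"
  define B where "B = {x\<in>space N. 1/2 \<le> eta x}"
  have [measurable]: "h \<in> N \<rightarrow>\<^sub>M count_space UNIV" using assms by (simp add: classifier_def)
  have sets: "G \<in> sets N" "B \<in> sets N" unfolding G_def B_def by measurable
  have "{x\<in>space N. bayes_label eta x = 1} = B" by (auto simp: bayes_label_def B_def)
  then have accuracy_bayes:
    "accuracy M X Y (bayes_label eta) = label_mass 1 B + label_mass (-1) (space N - B)"
    using accuracy_eq_label_mass[OF classifier_bayes_label[OF eta_measurable]] by simp
  have "(space N - G) \<inter> B = B - G" "(space N - B) \<inter> G = G - B" "(space N - G) - B = (space N - B) - G"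
    by (auto simp: G_def B_def)
  then have "label_mass 1 G = label_mass 1 (G \<inter> B) + label_mass 1 (G - B)"
    "label_mass (-1) (space N - G) = label_mass (-1) (B - G) + label_mass (-1) ((space N - B) - G)"
    "label_mass 1 B = label_mass 1 (G \<inter> B) + label_mass 1 (B - G)"
    "label_mass (-1) (space N - B) = label_mass (-1) (G - B) + label_mass (-1) ((space N - B) - G)"
    using label_mass_split[OF sets(1,2), of 1] label_mass_split[of "space N - G" B "-1"]
      label_mass_split[OF sets(2,1), of 1] label_mass_split[of "space N - B" G "-1"] sets
    by (simp_all add: Int_commute)
  moreover have "label_mass (-1) (B - G) \<le> label_mass 1 (B - G)"
    using sets by (intro label_mass_le_of_half_le) (auto simp: B_def)
  moreover have "label_mass 1 (G - B) \<le> label_mass (-1) (G - B)"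
    using sets by (intro label_mass_le_of_le_half) (auto simp: G_def B_def)
  ultimately show ?thesis
    using accuracy_eq_label_mass[OF assms] accuracy_bayes by (simp add: G_def)
qed

end

theorem theorem2:
  fixes M :: "'a measure" and N :: "'x measure"
    and X :: "'a \<Rightarrow> 'x" and Y :: "'a \<Rightarrow> int"
    and eta :: "'x \<Rightarrow> real" and f :: "real \<Rightarrow> real"
  assumes "prob_space M"
    and "X \<in> M \<rightarrow>\<^sub>M N"
    and "Y \<in> M \<rightarrow>\<^sub>M count_space UNIV"
    and "\<forall>\<omega>\<in>space M. Y \<omega> \<in> labels"
    and "eta \<in> borel_measurable N"
    and "\<forall>A\<in>sets N. measure M {\<omega> \<in> space M. X \<omega> \<in> A \<and> Y \<omega> = 1}
            = (LINT \<omega>:(X -` A \<inter> space M)|M. eta (X \<omega>))"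
    and "measure M {\<omega> \<in> space M. bayes_label eta (X \<omega>) = 1}
          = measure M {\<omega> \<in> space M. bayes_label eta (X \<omega>) = -1}"
    and "convex_on {0..} f"
    and "f 1 = 0"
    and "\<forall>u\<ge>0. \<forall>v\<ge>0. \<bar>u - 1\<bar> \<le> \<bar>v - 1\<bar> \<longrightarrow> f u \<le> f v"
  shows "classifier N (bayes_label eta)
    \<and> (\<forall>h. classifier N h \<longrightarrow> accuracy M X Y h \<le> accuracy M X Y (bayes_label eta))
    \<and> (\<forall>h. classifier N h \<longrightarrow>
          fdiv f (joint_mass M X h (bayes_label eta)) (prod_mass M X h (bayes_label eta)) (labels \<times> labels)
          \<le> fdiv f (joint_mass M X (bayes_label eta) (bayes_label eta))
                    (prod_mass M X (bayes_label eta) (bayes_label eta)) (labels \<times> labels))"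
proof -
  interpret bayes_model M N X Y eta
    using assms(1-6) by (auto simp: bayes_model_def bayes_model_axioms_def classifier_def)
  let ?b = "bayes_label eta"
  have classifier_b: "classifier N ?b"
    using assms(5) by (rule classifier_bayes_label)
  have balanced: "\<forall>c\<in>labels. prob {\<omega>\<in>space M. ?b (X \<omega>) = c} = 1/2"
    using balanced_label_half[OF classifier_comp[OF assms(2) classifier_b] assms(7)] by blast
  \<comment> \<open>Convexity alone bounds the divergence.\<close>
  have "fdiv f (joint_mass M X h ?b) (prod_mass M X h ?b) (labels \<times> labels)
      \<le> fdiv f (joint_mass M X ?b ?b) (prod_mass M X ?b ?b) (labels \<times> labels)"
    if "classifier N h" for h
    using fdiv_joint_mass_le[OF assms(8) assms(2) that classifier_b balanced]
    by (simp add: fdiv_joint_mass_self[where k = ?b and X = X, OF balanced])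
  then show ?thesis
    using classifier_b accuracy_le_bayes_label by blast
qed

end
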